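(* Assume $(H,T)$ satisfies the Standing Assumption (Assumption A). Let $[\gamma],[\eta]\in H/T$ and suppose there exist $\gamma'\in[\gamma]$ and $\eta'\in[\eta]$ with $(\gamma',\eta')\in H^{(2)}$. Then for every $\gamma''\in[\gamma]$ there is a unique $\eta''\in[\eta]$ with $(\gamma'',\eta'')\in H^{(2)}$.
   Context: Standing Assumption (Assumption A). $H$ is a Hausdorff étale groupoid with $H^{(0)}=T$, and $p:T\to X$ is an open quotient map such that each $T_x:=p^{-1}(x)$ is a compact Abelian group (so $T$ is a bundle of compact Abelian groups over $X$; this group structure is not the groupoid structure of $H$). Put $p_s=p\circ s$, $p_r=p\circ r$ on $H$. Write $t{\blacktriangleright}\eta$ (defined when $p(t)=p_r(\eta)$) for a left action and $\eta{\blacktriangleleft}t$ (defined when $p(t)=p_s(\eta)$) for a right action of the group bundle $T$ on $H$. Then: (1) these left and right actions are continuous, commute, and are free and proper, with (a) $t{\blacktriangleright}u=u{\blacktriangleleft}t$ for all $u\in H^{(0)}$, $t\in T$; (b) $r(t{\blacktriangleright}\gamma)=t{\blacktriangleright}r(\gamma)$ for $\gamma\in p_r^{-1}(p(t))$ and $s(\eta{\blacktriangleleft}t)=s(\eta){\blacktriangleleft}t$ for $\eta\in p_s^{-1}(p(t))$; (2) there are continuous maps $\lambda:H\,{}_{p_s}\!*_p\,T\to T$, $(\eta,t)\mapsto\lambda_\eta(t)$, and $\rho:T\,{}_p\!*_{p_r}\,H\to T$, $(t,\eta)\mapsto\rho_\eta(t)$, such that for all $\gamma,\eta\in H$ and $t\in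 T$ (whenever defined): (a) $\eta{\blacktriangleleft}t=\lambda_\eta(t){\blacktriangleright}\eta$; (b) $t{\blacktriangleright}\eta=\eta{\blacktriangleleft}\rho_\eta(t)$; (c) $(\gamma\eta){\blacktriangleleft}t=(\gamma{\blacktriangleleft}\lambda_\eta(t))(\eta{\blacktriangleleft}t)$; (d) $t{\blacktriangleright}(\gamma\eta)=(t{\blacktriangleright}\gamma)(\rho_\gamma(t){\blacktriangleright}\eta)$; (e) $(\eta{\blacktriangleleft}t)^{-1}=t{\blacktriangleright}\eta^{-1}$; (f) $(t{\blacktriangleright}\eta)^{-1}=\eta^{-1}{\blacktriangleleft}t$. $H/T$ is the quotient of $H$ by the right $T$-action; $[\eta]=\{\eta{\blacktriangleleft}t:t\in T_{p_s(\eta)}\}$ (equivalently the left $T$-orbit of $\eta$). *)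

theory Defs
  imports "HOL-Analysis.Analysis" "HOL-Algebra.Group"
begin

text \<open>A groupoid on the whole type 'h: source s, range r, multiplication m
  (defined on composable pairs, s a = r b), inverse i. The unit space is the range of s.\<close>
definition groupoid :: "('h \<Rightarrow> 'h) \<Rightarrow> ('h \<Rightarrow> 'h) \<Rightarrow> ('h \<Rightarrow> 'h \<Rightarrow> 'h) \<Rightarrow> ('h \<Rightarrow> 'h) \<Rightarrow> bool" where
  "groupoid s r m i \<longleftrightarrow>
     (\<forall>a b. s a = r b \<longrightarrow> s (m a b) = s b \<and> r (m a b) = r a) \<and>
     (\<forall>a b c. s a = r b \<and> s b = r c \<longrightarrow> m (m a b) c = m a (m b c)) \<and>
     (\<forall>a. s (s a) = s a \<and> r (s a) = s a \<and> s (r a) = r a \<and> r (r a) = r a) \<and>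
     (\<forall>a. m (r a) a = a \<and> m a (s a) = a) \<and>
     (\<forall>a. s (i a) = r a \<and> r (i a) = s a \<and> m a (i a) = r a \<and> m (i a) a = s a)"

definition unit_space :: "('h \<Rightarrow> 'h) \<Rightarrow> 'h set" where
  "unit_space s = range s"

definition composable :: "('h \<Rightarrow> 'h) \<Rightarrow> ('h \<Rightarrow> 'h) \<Rightarrow> ('h \<times> 'h) set" where
  "composable s r = {(a, b). s a = r b}"

definition local_homeo :: "('a::topological_space \<Rightarrow> 'a) \<Rightarrow> bool" where
  "local_homeo f \<longleftrightarrow> (\<forall>x. \<exists>U. open U \<and> x \<in> U \<and> open (f ` U) \<and> (\<exists>g. homeomorphism U (f ` U) f g))"

text \<open>Hausdorffness is imposed through the type class t2_space on 'h.\<close>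
definition etale_groupoid ::
  "('h::topological_space \<Rightarrow> 'h) \<Rightarrow> ('h \<Rightarrow> 'h) \<Rightarrow> ('h \<Rightarrow> 'h \<Rightarrow> 'h) \<Rightarrow> ('h \<Rightarrow> 'h) \<Rightarrow> bool" where
  "etale_groupoid s r m i \<longleftrightarrow> groupoid s r m i \<and>
     continuous_on (composable s r) (\<lambda>(a, b). m a b) \<and> continuous_on UNIV i \<and>
     local_homeo r \<and> local_homeo s"

definition fib :: "'h set \<Rightarrow> ('h \<Rightarrow> 'x) \<Rightarrow> 'x \<Rightarrow> 'h set" where
  "fib T p x = {t \<in> T. p t = x}"

definition fibre_group :: "'h set \<Rightarrow> ('h \<Rightarrow> 'x) \<Rightarrow> ('h \<Rightarrow> 'h \<Rightarrow> 'h) \<Rightarrow> ('x \<Rightarrow> 'h) \<Rightarrow> 'x \<Rightarrow> 'h monoid" where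
  "fibre_group T p gm ge x = \<lparr>carrier = fib T p x, mult = gm, one = ge x\<rparr>"

definition compact_abelian_group_bundle ::
  "'h::topological_space set \<Rightarrow> ('h \<Rightarrow> 'x::topological_space) \<Rightarrow> ('h \<Rightarrow> 'h \<Rightarrow> 'h) \<Rightarrow> ('x \<Rightarrow> 'h) \<Rightarrow> bool" where
  "compact_abelian_group_bundle T p gm ge \<longleftrightarrow>
     continuous_map (top_of_set T) euclidean p \<and>
     quotient_map (top_of_set T) euclidean p \<and>
     open_map (top_of_set T) euclidean p \<and>
     (\<forall>x. comm_group (fibre_group T p gm ge x) \<and> compact (fib T p x)) \<and>
     continuous_on {(a, b). a \<in> T \<and> b \<in> T \<and> p a = p b} (\<lambda>(a, b). gm a b) \<and>
     continuous_on UNIV ge \<and>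
     continuous_on T (\<lambda>a. inv\<^bsub>fibre_group T p gm ge (p a)\<^esub> a)"

definition proper_on :: "'a::topological_space set \<Rightarrow> ('a \<Rightarrow> 'b::topological_space) \<Rightarrow> bool" where
  "proper_on D F \<longleftrightarrow> (\<forall>K. compact K \<longrightarrow> compact {z \<in> D. F z \<in> K})"

text \<open>Parameters: groupoid (s, r, m, i) on 'h with H^(0) = T = range s;
  projection p; fibrewise group multiplication gm and units ge; left action lact t \<eta> = t \<triangleright> \<eta>;
  right action ract \<eta> t = \<eta> \<triangleleft> t; lam \<eta> t = \<lambda>_\<eta>(t); rho \<eta> t = \<rho>_\<eta>(t).
  Equations are required whenever both sides are defined.\<close>
definition standing_assumption ::
  "('h::t2_space \<Rightarrow> 'h) \<Rightarrow> ('h \<Rightarrow> 'h) \<Rightarrow> ('h \<Rightarrow> 'h \<Rightarrow> 'h) \<Rightarrow> ('h \<Rightarrow> 'h) \<Rightarrow>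
   ('h \<Rightarrow> 'x::topological_space) \<Rightarrow> ('h \<Rightarrow> 'h \<Rightarrow> 'h) \<Rightarrow> ('x \<Rightarrow> 'h) \<Rightarrow>
   ('h \<Rightarrow> 'h \<Rightarrow> 'h) \<Rightarrow> ('h \<Rightarrow> 'h \<Rightarrow> 'h) \<Rightarrow> ('h \<Rightarrow> 'h \<Rightarrow> 'h) \<Rightarrow> ('h \<Rightarrow> 'h \<Rightarrow> 'h) \<Rightarrow> bool" where
  "standing_assumption s r m i p gm ge lact ract lam rho \<longleftrightarrow>
   (let T = unit_space s;
        LD = {(t, \<eta>). t \<in> T \<and> p t = p (r \<eta>)};
        RD = {(\<eta>, t). t \<in> T \<and> p t = p (s \<eta>)} in
     etale_groupoid s r m i \<and>
     compact_abelian_group_bundle T p gm ge \<and>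
     \<comment> \<open>left action of the group bundle T on H with anchor p_r\<close>
     (\<forall>\<eta>. lact (ge (p (r \<eta>))) \<eta> = \<eta>) \<and>
     (\<forall>t \<eta>. (t, \<eta>) \<in> LD \<longrightarrow> p (r (lact t \<eta>)) = p t) \<and>
     (\<forall>t1 t2 \<eta>. (t2, \<eta>) \<in> LD \<and> t1 \<in> T \<and> p t1 = p t2 \<longrightarrow> lact t1 (lact t2 \<eta>) = lact (gm t1 t2) \<eta>) \<and>
     \<comment> \<open>right action of the group bundle T on H with anchor p_s\<close>
     (\<forall>\<eta>. ract \<eta> (ge (p (s \<eta>))) = \<eta>) \<and>
     (\<forall>\<eta> t. (\<eta>, t) \<in> RD \<longrightarrow> p (s (ract \<eta> t)) = p t) \<and>
     (\<forall>\<eta> t1 t2. (\<eta>, t1) \<in> RD \<and> t2 \<in> T \<and> p t2 = p t1 \<longrightarrow> ract (ract \<eta> t1) t2 = ract \<eta> (gm t1 t2)) \<and>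
     \<comment> \<open>(1): continuous, commuting, free, proper\<close>
     continuous_on LD (\<lambda>(t, \<eta>). lact t \<eta>) \<and>
     continuous_on RD (\<lambda>(\<eta>, t). ract \<eta> t) \<and>
     (\<forall>t1 t2 \<eta>. (t1, \<eta>) \<in> LD \<and> (\<eta>, t2) \<in> RD \<and> (lact t1 \<eta>, t2) \<in> RD \<and> (t1, ract \<eta> t2) \<in> LD
        \<longrightarrow> ract (lact t1 \<eta>) t2 = lact t1 (ract \<eta> t2)) \<and>
     (\<forall>t \<eta>. (t, \<eta>) \<in> LD \<and> lact t \<eta> = \<eta> \<longrightarrow> t = ge (p t)) \<and>
     (\<forall>\<eta> t. (\<eta>, t) \<in> RD \<and> ract \<eta> t = \<eta> \<longrightarrow> t = ge (p t)) \<and>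
     proper_on LD (\<lambda>(t, \<eta>). (lact t \<eta>, \<eta>)) \<and>
     proper_on RD (\<lambda>(\<eta>, t). (ract \<eta> t, \<eta>)) \<and>
     \<comment> \<open>(1a)\<close>
     (\<forall>u t. u \<in> T \<and> t \<in> T \<and> p t = p u \<longrightarrow> lact t u = ract u t) \<and>
     \<comment> \<open>(1b)\<close>
     (\<forall>t \<gamma>. (t, \<gamma>) \<in> LD \<longrightarrow> r (lact t \<gamma>) = lact t (r \<gamma>)) \<and>
     (\<forall>\<eta> t. (\<eta>, t) \<in> RD \<longrightarrow> s (ract \<eta> t) = ract (s \<eta>) t) \<and>
     \<comment> \<open>(2): continuous maps lam : H _{p_s}*_p T \<rightarrow> T and rho : T _p*_{p_r} H \<rightarrow> T\<close>
     (\<forall>\<eta> t. (\<eta>, t) \<in> RD \<longrightarrow> lam \<eta> t \<in> T \<and> p (lam \<eta> t) = p (r \<eta>)) \<and>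
     (\<forall>t \<eta>. (t, \<eta>) \<in> LD \<longrightarrow> rho \<eta> t \<in> T \<and> p (rho \<eta> t) = p (s \<eta>)) \<and>
     continuous_on RD (\<lambda>(\<eta>, t). lam \<eta> t) \<and>
     continuous_on {(t, \<eta>). (t, \<eta>) \<in> LD} (\<lambda>(t, \<eta>). rho \<eta> t) \<and>
     \<comment> \<open>(2a), (2b)\<close>
     (\<forall>\<eta> t. (\<eta>, t) \<in> RD \<longrightarrow> ract \<eta> t = lact (lam \<eta> t) \<eta>) \<and>
     (\<forall>t \<eta>. (t, \<eta>) \<in> LD \<longrightarrow> lact t \<eta> = ract \<eta> (rho \<eta> t)) \<and>
     \<comment> \<open>(2c)\<close>
     (\<forall>\<gamma> \<eta> t. s \<gamma> = r \<eta> \<and> (\<eta>, t) \<in> RD \<and> s (ract \<gamma> (lam \<eta> t)) = r (ract \<eta> t) \<longrightarrow>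
        ract (m \<gamma> \<eta>) t = m (ract \<gamma> (lam \<eta> t)) (ract \<eta> t)) \<and>
     \<comment> \<open>(2d)\<close>
     (\<forall>\<gamma> \<eta> t. s \<gamma> = r \<eta> \<and> (t, \<gamma>) \<in> LD \<and> s (lact t \<gamma>) = r (lact (rho \<gamma> t) \<eta>) \<longrightarrow>
        lact t (m \<gamma> \<eta>) = m (lact t \<gamma>) (lact (rho \<gamma> t) \<eta>)) \<and>
     \<comment> \<open>(2e), (2f)\<close>
     (\<forall>\<eta> t. (\<eta>, t) \<in> RD \<longrightarrow> i (ract \<eta> t) = lact t (i \<eta>)) \<and>
     (\<forall>t \<eta>. (t, \<eta>) \<in> LD \<longrightarrow> i (lact t \<eta>) = ract (i \<eta>) t))"

text \<open>The class [\<eta>] in H/T: the right T-orbit of \<eta>.\<close>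
definition orbit :: "('h \<Rightarrow> 'h) \<Rightarrow> ('h \<Rightarrow> 'x) \<Rightarrow> ('h \<Rightarrow> 'h \<Rightarrow> 'h) \<Rightarrow> 'h \<Rightarrow> 'h set" where
  "orbit s p ract \<eta> = {ract \<eta> t | t. t \<in> unit_space s \<and> p t = p (s \<eta>)}"

end

theory Submission
  imports Defs
begin

text \<open>
  The source and range maps send T-classes onto T-classes of units: s(\<gamma> \<triangleleft> t) = s \<gamma> \<triangleleft> t,
  and r(\<eta> \<triangleleft> t) = r \<eta> \<triangleleft> \<lambda>_\<eta>(t), where \<lambda>_\<eta> maps the fibre over p(s \<eta>) onto the fibre
  over p(r \<eta>) because freeness of the left action makes \<rho>_\<eta> a right inverse of it. So
  s[\<gamma>] = [s \<gamma>] and r[\<eta>] = [r \<eta>]; the hypothesis makes these two classes meet, hence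
  coincide. Finally r is injective on [\<eta>]: the right action on the unit r \<eta> is free, and
  \<eta> \<triangleleft> t = \<lambda>_\<eta>(t) \<triangleright> \<eta> is determined by \<lambda>_\<eta>(t).
\<close>

lemma mem_fib [simp]: "a \<in> fib T p x \<longleftrightarrow> a \<in> T \<and> p a = x"
  by (simp add: fib_def)

lemma fibre_group_simps [simp]:
  "carrier (fibre_group T p gm ge x) = fib T p x"
  "a \<otimes>\<^bsub>fibre_group T p gm ge x\<^esub> b = gm a b"
  "\<one>\<^bsub>fibre_group T p gm ge x\<^esub> = ge x"
  by (simp_all add: fibre_group_def)

lemma (in group) inj_on_right_action_of_free:
  assumes act_one: "act x \<one> = x"
    and act_mult: "\<And>a b. a \<in> carrier G \<Longrightarrow> b \<in> carrier G \<Longrightarrow> act (act x a) b = act x (a \<otimes> b)"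
    and free: "\<And>a. a \<in> carrier G \<Longrightarrow> act x a = x \<Longrightarrow> a = \<one>"
  shows "inj_on (act x) (carrier G)"
proof (rule inj_onI)
  fix a b assume a: "a \<in> carrier G" and b: "b \<in> carrier G" and eq: "act x a = act x b"
  have "act x (a \<otimes> inv b) = act (act x a) (inv b)"
    using a b by (simp add: act_mult)
  also have "\<dots> = act (act x b) (inv b)"
    using eq by simp
  also have "\<dots> = x"
    using b by (simp add: act_mult act_one)
  finally have "a \<otimes> inv b = \<one>"
    using a b by (simp add: free)
  then show "a = b"
    using a b by (simp add: inv_solve_right')
qed

lemma (in group) inj_on_left_action_of_free:
  assumes act_one: "act \<one> x = x"
    and act_mult: "\<And>a b. a \<in> carrier G \<Longrightarrow> b \<in> carrier G \<Longrightarrow> act a (act b x) = act (a \<otimes> b) x"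
    and free: "\<And>a. a \<in> carrier G \<Longrightarrow> act a x = x \<Longrightarrow> a = \<one>"
  shows "inj_on (\<lambda>a. act a x) (carrier G)"
proof (rule inj_onI)
  fix a b assume a: "a \<in> carrier G" and b: "b \<in> carrier G" and eq: "act a x = act b x"
  have "act (inv b \<otimes> a) x = act (inv b) (act a x)"
    using a b by (simp add: act_mult)
  also have "\<dots> = act (inv b) (act b x)"
    using eq by simp
  also have "\<dots> = x"
    using b by (simp add: act_mult act_one)
  finally have "inv b \<otimes> a = \<one>"
    using a b by (simp add: free)
  then show "a = b"
    using a b by (simp add: inv_solve_left')
qed

locale standing_setting =
  fixes s r :: "'h::t2_space \<Rightarrow> 'h" and m :: "'h \<Rightarrow> 'h \<Rightarrow> 'h" and i :: "'h \<Rightarrow> 'h"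
    and p :: "'h \<Rightarrow> 'x::topological_space" and gm :: "'h \<Rightarrow> 'h \<Rightarrow> 'h" and ge :: "'x \<Rightarrow> 'h"
    and lact ract lam rho :: "'h \<Rightarrow> 'h \<Rightarrow> 'h"
  assumes standing: "standing_assumption s r m i p gm ge lact ract lam rho"
begin

abbreviation "T \<equiv> unit_space s"

abbreviation "fibre x \<equiv> fib T p x"

text \<open>Clauses (2a) and (2b) rewrite into each other, so the unfolded assumption must be kept
  away from the simplifier; its clauses are read off by smt instead.\<close>

lemmas standing_unfolded =
  standing[unfolded standing_assumption_def Let_def mem_Collect_eq prod.case]

lemma groupoid: "groupoid s r m i"
  using standing_unfolded[THEN conjunct1] by (simp add: etale_groupoid_def)

lemma fibre_comm_group: "comm_group (fibre_group T p gm ge x)"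
  using standing_unfolded[THEN conjunct2, THEN conjunct1]
  by (simp add: compact_abelian_group_bundle_def)

lemma lact_one: "lact (ge (p (r \<eta>))) \<eta> = \<eta>"
  using standing_unfolded by (smt (verit) mem_fib)

lemma lact_lact:
  "t2 \<in> fibre (p (r \<eta>)) \<Longrightarrow> t1 \<in> fibre (p (r \<eta>)) \<Longrightarrow>
    lact t1 (lact t2 \<eta>) = lact (gm t1 t2) \<eta>"
  using standing_unfolded by (smt (verit) mem_fib)

lemma lact_free: "t \<in> fibre (p (r \<eta>)) \<Longrightarrow> lact t \<eta> = \<eta> \<Longrightarrow> t = ge (p (r \<eta>))"
  using standing_unfolded by (smt (verit) mem_fib)

lemma ract_one: "ract \<eta> (ge (p (s \<eta>))) = \<eta>"
  using standing_unfolded by (smt (verit) mem_fib)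

lemma ract_ract:
  "t1 \<in> fibre (p (s \<eta>)) \<Longrightarrow> t2 \<in> fibre (p (s \<eta>)) \<Longrightarrow>
    ract (ract \<eta> t1) t2 = ract \<eta> (gm t1 t2)"
  using standing_unfolded by (smt (verit) mem_fib)

lemma ract_free: "t \<in> fibre (p (s \<eta>)) \<Longrightarrow> ract \<eta> t = \<eta> \<Longrightarrow> t = ge (p (s \<eta>))"
  using standing_unfolded by (smt (verit) mem_fib)

lemma p_s_ract: "t \<in> fibre (p (s \<eta>)) \<Longrightarrow> p (s (ract \<eta> t)) = p t"
  using standing_unfolded by (smt (verit) mem_fib)

lemma lact_unit: "u \<in> T \<Longrightarrow> t \<in> fibre (p u) \<Longrightarrow> lact t u = ract u t"
  using standing_unfolded by (smt (verit) mem_fib)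

lemma r_lact: "t \<in> fibre (p (r \<eta>)) \<Longrightarrow> r (lact t \<eta>) = lact t (r \<eta>)"
  using standing_unfolded by (smt (verit) mem_fib)

lemma s_ract: "t \<in> fibre (p (s \<eta>)) \<Longrightarrow> s (ract \<eta> t) = ract (s \<eta>) t"
  using standing_unfolded by (smt (verit) mem_fib)

lemma lam_mem_fibre: "t \<in> fibre (p (s \<eta>)) \<Longrightarrow> lam \<eta> t \<in> fibre (p (r \<eta>))"
  using standing_unfolded by (smt (verit) mem_fib)

lemma rho_mem_fibre: "t \<in> fibre (p (r \<eta>)) \<Longrightarrow> rho \<eta> t \<in> fibre (p (s \<eta>))"
  using standing_unfolded by (smt (verit) mem_fib)

lemma ract_eq_lact_lam: "t \<in> fibre (p (s \<eta>)) \<Longrightarrow> ract \<eta> t = lact (lam \<eta> t) \<eta>"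
  using standing_unfolded by (smt (verit) mem_fib)

lemma lact_eq_ract_rho: "t \<in> fibre (p (r \<eta>)) \<Longrightarrow> lact t \<eta> = ract \<eta> (rho \<eta> t)"
  using standing_unfolded by (smt (verit) mem_fib)

lemma s_mem_units: "s a \<in> T"
  by (simp add: unit_space_def)

lemma r_mem_units: "r a \<in> T"
proof -
  have "r a = s (i a)"
    using groupoid unfolding groupoid_def by metis
  then show ?thesis
    by (simp add: s_mem_units)
qed

lemma s_unit: "u \<in> T \<Longrightarrow> s u = u"
  using groupoid by (auto simp: unit_space_def groupoid_def)

lemma r_ract:
  assumes t: "t \<in> fibre (p (s \<eta>))"
  shows "r (ract \<eta> t) = ract (r \<eta>) (lam \<eta> t)"
proof -
  have lam: "lam \<eta> t \<in> fibre (p (r \<eta>))"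
    by (rule lam_mem_fibre[OF t])
  have "r (ract \<eta> t) = lact (lam \<eta> t) (r \<eta>)"
    using t lam by (simp add: ract_eq_lact_lam r_lact)
  also have "\<dots> = ract (r \<eta>) (lam \<eta> t)"
    using lam by (simp add: lact_unit r_mem_units)
  finally show ?thesis .
qed

lemma inj_on_ract_unit:
  assumes u: "u \<in> T"
  shows "inj_on (ract u) (fibre (p u))"
proof -
  interpret comm_group "fibre_group T p gm ge (p u)"
    by (rule fibre_comm_group)
  have su: "s u = u"
    by (rule s_unit[OF u])
  have "inj_on (ract u) (carrier (fibre_group T p gm ge (p u)))"
    by (rule inj_on_right_action_of_free)
      (use ract_one[of u] ract_ract[of _ u] ract_free[of _ u] in \<open>simp_all add: su\<close>)
  then show ?thesis
    by simp
qed

lemma inj_on_lact: "inj_on (\<lambda>t. lact t \<eta>) (fibre (p (r \<eta>)))"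
proof -
  interpret comm_group "fibre_group T p gm ge (p (r \<eta>))"
    by (rule fibre_comm_group)
  have "inj_on (\<lambda>t. lact t \<eta>) (carrier (fibre_group T p gm ge (p (r \<eta>))))"
    by (rule inj_on_left_action_of_free)
      (use lact_one[of \<eta>] lact_lact[of _ \<eta>] lact_free[of _ \<eta>] in simp_all)
  then show ?thesis
    by simp
qed

lemma lam_rho:
  assumes a: "a \<in> fibre (p (r \<eta>))"
  shows "lam \<eta> (rho \<eta> a) = a"
proof -
  have rho: "rho \<eta> a \<in> fibre (p (s \<eta>))"
    by (rule rho_mem_fibre[OF a])
  have "lact (lam \<eta> (rho \<eta> a)) \<eta> = ract \<eta> (rho \<eta> a)"
    by (rule ract_eq_lact_lam[OF rho, symmetric])
  also have "\<dots> = lact a \<eta>"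
    by (rule lact_eq_ract_rho[OF a, symmetric])
  finally have "lact (lam \<eta> (rho \<eta> a)) \<eta> = lact a \<eta>" .
  then show ?thesis
    by (rule inj_onD[OF inj_on_lact _ lam_mem_fibre[OF rho] a])
qed

lemma image_lam_fibre: "lam \<eta> ` fibre (p (s \<eta>)) = fibre (p (r \<eta>))"
proof
  show "lam \<eta> ` fibre (p (s \<eta>)) \<subseteq> fibre (p (r \<eta>))"
    using lam_mem_fibre by blast
  show "fibre (p (r \<eta>)) \<subseteq> lam \<eta> ` fibre (p (s \<eta>))"
  proof
    fix a assume a: "a \<in> fibre (p (r \<eta>))"
    then show "a \<in> lam \<eta> ` fibre (p (s \<eta>))"
      using lam_rho[OF a] rho_mem_fibre[OF a] by (metis image_eqI)
  qed
qed

lemma orbit_eq_image: "orbit s p ract \<eta> = ract \<eta> ` fibre (p (s \<eta>))"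
  by (auto simp: orbit_def)

lemma orbit_eq_of_mem:
  assumes "b \<in> orbit s p ract a"
  shows "orbit s p ract b = orbit s p ract a"
proof -
  obtain t where t: "t \<in> fibre (p (s a))" and b: "b = ract a t"
    using assms by (auto simp: orbit_eq_image)
  interpret comm_group "fibre_group T p gm ge (p (s a))"
    by (rule fibre_comm_group)
  have "p (s b) = p (s a)"
    using p_s_ract[OF t] t b by simp
  then have "orbit s p ract b = ract b ` fibre (p (s a))"
    by (simp add: orbit_eq_image)
  also have "\<dots> = ract a ` gm t ` fibre (p (s a))"
    unfolding image_image
  proof (rule image_cong)
    fix u assume "u \<in> fibre (p (s a))"
    then show "ract b u = ract a (gm t u)"
      using ract_ract[OF t] b by blast
  qed simp
  also have "gm t ` fibre (p (s a)) = fibre (p (s a))"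
    using surj_const_mult[of t] t by simp
  finally show ?thesis
    by (simp add: orbit_eq_image)
qed

lemma s_image_orbit: "s ` orbit s p ract \<gamma> = orbit s p ract (s \<gamma>)"
proof -
  have "s ` orbit s p ract \<gamma> = ract (s \<gamma>) ` fibre (p (s \<gamma>))"
    unfolding orbit_eq_image image_image by (rule image_cong) (simp_all add: s_ract)
  then show ?thesis
    by (simp add: orbit_eq_image s_unit s_mem_units)
qed

lemma r_image_orbit: "r ` orbit s p ract \<eta> = orbit s p ract (r \<eta>)"
proof -
  have "r ` orbit s p ract \<eta> = ract (r \<eta>) ` lam \<eta> ` fibre (p (s \<eta>))"
    unfolding orbit_eq_image image_image by (rule image_cong) (simp_all add: r_ract)
  then show ?thesis
    by (simp add: orbit_eq_image image_lam_fibre s_unit r_mem_units)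
qed

lemma inj_on_r_orbit: "inj_on r (orbit s p ract \<eta>)"
proof (rule inj_onI)
  fix a b assume "a \<in> orbit s p ract \<eta>" "b \<in> orbit s p ract \<eta>" and eq: "r a = r b"
  then obtain ta tb where ta: "ta \<in> fibre (p (s \<eta>))" "a = ract \<eta> ta"
    and tb: "tb \<in> fibre (p (s \<eta>))" "b = ract \<eta> tb"
    by (auto simp: orbit_eq_image)
  have "ract (r \<eta>) (lam \<eta> ta) = ract (r \<eta>) (lam \<eta> tb)"
    using eq ta tb by (simp add: r_ract)
  then have "lam \<eta> ta = lam \<eta> tb"
    using inj_on_ract_unit[OF r_mem_units] lam_mem_fibre[OF ta(1)] lam_mem_fibre[OF tb(1)]
    by (simp add: inj_on_def)
  then show "a = b"
    using ta tb by (simp add: ract_eq_lact_lam)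
qed

end

theorem mainTheorem10:
  fixes s r :: "'h::t2_space \<Rightarrow> 'h" and m :: "'h \<Rightarrow> 'h \<Rightarrow> 'h" and i :: "'h \<Rightarrow> 'h"
    and p :: "'h \<Rightarrow> 'x::topological_space" and gm :: "'h \<Rightarrow> 'h \<Rightarrow> 'h" and ge :: "'x \<Rightarrow> 'h"
    and lact ract lam rho :: "'h \<Rightarrow> 'h \<Rightarrow> 'h"
    and \<gamma> \<eta> :: 'h
  assumes "standing_assumption s r m i p gm ge lact ract lam rho"
    and "\<exists>\<gamma>' \<in> orbit s p ract \<gamma>. \<exists>\<eta>' \<in> orbit s p ract \<eta>. s \<gamma>' = r \<eta>'"
  shows "\<forall>\<gamma>'' \<in> orbit s p ract \<gamma>. \<exists>!\<eta>''. \<eta>'' \<in> orbit s p ract \<eta> \<and> s \<gamma>'' = r \<eta>''"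
proof -
  interpret standing_setting s r m i p gm ge lact ract lam rho
    by (rule standing_setting.intro[OF assms(1)])
  obtain \<gamma>' \<eta>' where "\<gamma>' \<in> orbit s p ract \<gamma>" "\<eta>' \<in> orbit s p ract \<eta>" "s \<gamma>' = r \<eta>'"
    using assms(2) by blast
  then have "s \<gamma>' \<in> orbit s p ract (s \<gamma>)" "s \<gamma>' \<in> orbit s p ract (r \<eta>)"
    using s_image_orbit r_image_orbit by blast+
  then have "orbit s p ract (s \<gamma>) = orbit s p ract (r \<eta>)"
    using orbit_eq_of_mem by metis
  then have "s ` orbit s p ract \<gamma> = r ` orbit s p ract \<eta>"
    by (simp add: s_image_orbit r_image_orbit)
  then show ?thesis
    using inj_on_r_orbit[of \<eta>] by (auto simp: inj_on_def)
qed

end
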